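(* There is a constant $c>0$ depending only on $d$ and $a$ (independent of $\eta$, $k$, $m$, $L$, $\bar\mu_0$) such that: (1) for every unit box $\triangle=B_k(y)$, $y\in\Omega_k$, as operators on $\mathcal L^2(\triangle)$, $$-\Delta^\eta_\triangle+\bar\mu_k+a_kQ_{\triangle,k}^*Q_{\triangle,k}\ \ge\ c\,(-\Delta^\eta_\triangle+1);$$ (2) as operators on $\mathcal L^2(\Omega)$, $$-\Delta^\eta_\Omega+\bar\mu_k+a_kQ_{\Omega,k}^*Q_{\Omega,k}\ \ge\ c\,(-\Delta^\eta_\Omega+1).$$ In particular $G_k(\Omega)$ exists as a bounded operator.
   Context: Standing setup. Fix an integer $d\ge1$, an odd integer $L>1$, integers $k\ge1$, $m\ge k$, and set $\eta=L^{-k}$. Let $\Omega=\eta\{0,1,\dots,L^m-1\}^d\subset\eta\mathbb Z^d$ and, for $0\le j\le m$, $\Omega_j=(L^j\eta)\{0,1,\dots,L^{m-j}-1\}^d$. For a finite set $O$ contained in a lattice of spacing $\epsilon$, $\mathcal L^2(O)$ denotes complex functions on $O$ with $\langle f,g\rangle=\epsilon^d\sum_{x\in O}\overline{f(x)}g(x)$. For $y\in (L^j\eta)\mathbb Z^d$ let $B_j(y)=\{x\in\eta\mathbb Z^d:\ y_\mu\le x_\mu<y_\mu+L^j\eta,\ \mu=0,\dots,d-1\}$. For a set $O$ which is a union of boxes $B_j(y)$, the averaging operator $Q_{O,j}:\mathcal L^2(O)\to\mathcal L^2(\{y: B_j(y)\subset O\})$ is $(Q_{O,j}f)(y)=L^{-jd}\sum_{x\in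 B_j(y)}f(x)$, with adjoint $(Q_{O,j}^*h)(x)=h(y_x)$, $x\in B_j(y_x)$. For a box $O=\eta(\{u_0,\dots,u_0+N-1\}\times\cdots)$ the Neumann Laplacian is $(\Delta^\eta_O f)(x)=\eta^{-2}\sum_{\mu}\big(f(x+\eta e_\mu)-2f(x)+f(x-\eta e_\mu)\big)$, where any value $f(x\pm\eta e_\mu)$ with $x\pm\eta e_\mu\notin O$ is replaced by $f(x)$. Fix $a\in(0,1]$ and set $a_j=a\frac{1-L^{-2}}{1-L^{-2j}}$. Fix $\bar\mu_0\ge0$, $\bar\mu_j=L^{2j}\bar\mu_0$. $G_k(\Omega)=(-\Delta^\eta_\Omega+\bar\mu_k+a_kQ_{\Omega,k}^*Q_{\Omega,k})^{-1}$. Operator inequalities are in the sense of quadratic forms. *)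

theory Defs
  imports "HOL-Analysis.Analysis"
begin

text \<open>Points of the fine lattice \<eta>Z^d are represented by their integer index vectors
  n :: int^'d (the physical point is \<eta> n). The dimension d is CARD('d).
  Functions in L^2(O) are functions int^'d \<Rightarrow> complex of which only the values on S matter.\<close>

definition unitv :: "'d::finite \<Rightarrow> int^'d" where
  "unitv \<mu> = (\<chi> i. if i = \<mu> then 1 else 0)"

definition ibox :: "int^'d::finite \<Rightarrow> int \<Rightarrow> (int^'d) set" where
  "ibox u N = {n. \<forall>\<mu>. u$\<mu> \<le> n$\<mu> \<and> n$\<mu> < u$\<mu> + N}"

definition lat_inner :: "real \<Rightarrow> (int^'d::finite) set \<Rightarrow> (int^'d \<Rightarrow> complex) \<Rightarrow> (int^'d \<Rightarrow> complex) \<Rightarrow> complex" where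
  "lat_inner \<epsilon> S f g = complex_of_real (\<epsilon> ^ CARD('d)) * (\<Sum>x\<in>S. cnj (f x) * g x)"

definition neumann_lap :: "real \<Rightarrow> (int^'d::finite) set \<Rightarrow> (int^'d \<Rightarrow> complex) \<Rightarrow> int^'d \<Rightarrow> complex" where
  "neumann_lap \<eta> S f x = complex_of_real (\<eta> powi (-2)) *
     (\<Sum>\<mu>\<in>UNIV. (if x + unitv \<mu> \<in> S then f (x + unitv \<mu>) else f x) - 2 * f x
                 + (if x - unitv \<mu> \<in> S then f (x - unitv \<mu>) else f x))"

text \<open>B_j(y) in index coordinates: y has index vector y (a multiple of L^j), and the
  block consists of the indices y_\<mu> \<le> x_\<mu> < y_\<mu> + L^j.\<close>
definition blockB :: "nat \<Rightarrow> nat \<Rightarrow> int^'d::finite \<Rightarrow> (int^'d) set" where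
  "blockB L j y = ibox y (int L ^ j)"

text \<open>The coarse point y_x with x \<in> B_j(y_x), y_x \<in> (L^j \<eta>)Z^d (index coordinates).\<close>
definition corner :: "nat \<Rightarrow> nat \<Rightarrow> int^'d::finite \<Rightarrow> int^'d" where
  "corner L j x = (\<chi> \<mu>. int L ^ j * (x$\<mu> div int L ^ j))"

text \<open>Averaging operator Q_{O,j}; defined (as 0) outside its domain {y. B_j(y) \<subseteq> O}.\<close>
definition avgQ :: "nat \<Rightarrow> nat \<Rightarrow> (int^'d::finite) set \<Rightarrow> (int^'d \<Rightarrow> complex) \<Rightarrow> int^'d \<Rightarrow> complex" where
  "avgQ L j S f y = (if blockB L j y \<subseteq> S
      then complex_of_real (1 / real L ^ (j * CARD('d))) * (\<Sum>x\<in>blockB L j y. f x) else 0)"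

definition adjQ :: "nat \<Rightarrow> nat \<Rightarrow> (int^'d::finite \<Rightarrow> complex) \<Rightarrow> int^'d \<Rightarrow> complex" where
  "adjQ L j h x = h (corner L j x)"

definition a_seq :: "real \<Rightarrow> nat \<Rightarrow> nat \<Rightarrow> real" where
  "a_seq a L j = a * (1 - real L powi (-2)) / (1 - real L powi (- 2 * int j))"

definition mu_seq :: "real \<Rightarrow> nat \<Rightarrow> nat \<Rightarrow> real" where
  "mu_seq \<mu>0 L j = real L ^ (2 * j) * \<mu>0"

definition opA :: "real \<Rightarrow> real \<Rightarrow> nat \<Rightarrow> nat \<Rightarrow> (int^'d::finite) set \<Rightarrow> (int^'d \<Rightarrow> complex) \<Rightarrow> int^'d \<Rightarrow> complex" where
  "opA a \<mu>0 L k S f x =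
     - neumann_lap (real L powi (- int k)) S f x + complex_of_real (mu_seq \<mu>0 L k) * f x
     + complex_of_real (a_seq a L k) * adjQ L k (avgQ L k S f) x"

definition opB :: "nat \<Rightarrow> nat \<Rightarrow> (int^'d::finite) set \<Rightarrow> (int^'d \<Rightarrow> complex) \<Rightarrow> int^'d \<Rightarrow> complex" where
  "opB L k S f x = - neumann_lap (real L powi (- int k)) S f x + f x"

text \<open>Index sets: \<Omega> = \<eta>{0,...,L^m-1}^d and unit boxes B_k(y), y = p \<in> \<Omega>_k = {0..L^{m-k}-1}^d
  (note L^k \<eta> = 1, so the index vector of y is L^k p).\<close>
definition OmegaI :: "nat \<Rightarrow> nat \<Rightarrow> (int^'d::finite) set" where
  "OmegaI L m = ibox 0 (int L ^ m)"

definition unit_box :: "nat \<Rightarrow> nat \<Rightarrow> int^'d::finite \<Rightarrow> (int^'d) set" where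
  "unit_box L k p = blockB L k (int L ^ k *s p)"

end

theory Submission
  imports Defs
begin

text \<open>The quadratic form of \<open>-\<Delta>\<close> with Neumann boundary conditions is \<open>\<eta>\<^sup>-\<^sup>2\<close> times the
  Dirichlet energy (summation by parts), and on a unit box \<open>\<triangle>\<close> the form of \<open>Q\<^sup>*Q\<close> is
  \<open>|\<Sum>\<^sub>\<triangle> f|\<^sup>2 / |\<triangle>|\<close>. A unit box is a lattice box of side \<open>N = L\<^sup>k\<close>, and \<open>N\<^sup>2 = \<eta>\<^sup>-\<^sup>2\<close>, so the
  discrete Poincare inequality \<open>\<Sum>\<^sub>\<triangle> |f|\<^sup>2 \<le> |\<Sum>\<^sub>\<triangle> f|\<^sup>2 / |\<triangle>| + (4\<^sup>d/2) N\<^sup>2 E(f)\<close> bounds the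
  mass by the two forms. It is proved by passing from \<open>x\<close> to \<open>y\<close> one coordinate at a time and
  telescoping along lattice lines. Summing over the unit boxes that tile \<open>\<Omega>\<close>, using that the
  energy of \<open>\<Omega>\<close> dominates the sum of the energies of the boxes and that
  \<open>a\<^sub>k \<ge> a (1 - L\<^sup>-\<^sup>2) \<ge> 3a/4\<close>, gives the bound with \<open>c = (3a/4) / (1 + 4\<^sup>d/2)\<close>.
  Injectivity of the operator on \<open>\<Omega>\<close> is a consequence of the coercivity.\<close>

lemma ibox_eq_image:
  "ibox (u::int^'d::finite) N = vec_lambda ` (PiE UNIV (\<lambda>i. {u$i..<u$i+N}))"
proof (rule set_eqI)
  fix x :: "int^'d"
  show "x \<in> ibox u N \<longleftrightarrow> x \<in> vec_lambda ` (PiE UNIV (\<lambda>i. {u$i..<u$i+N}))"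
  proof
    assume "x \<in> ibox u N"
    then have "vec_nth x \<in> PiE UNIV (\<lambda>i. {u$i..<u$i+N})" by (auto simp: ibox_def)
    then show "x \<in> vec_lambda ` (PiE UNIV (\<lambda>i. {u$i..<u$i+N}))"
      by (metis image_eqI vec_nth_inverse)
  qed (auto simp: ibox_def PiE_def Pi_def)
qed

lemma finite_ibox [simp]: "finite (ibox (u::int^'d::finite) N)"
  unfolding ibox_eq_image by (intro finite_imageI finite_PiE) simp_all

lemma card_ibox: "card (ibox (u::int^'d::finite) N) = nat N ^ CARD('d)"
proof -
  have "inj_on vec_lambda (PiE UNIV (\<lambda>i. {u$i..<u$i+N}))"
    by (rule inj_onI) simp
  then have "card (ibox u N) = card (PiE UNIV (\<lambda>i::'d. {u$i..<u$i+N}))"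
    unfolding ibox_eq_image by (rule card_image)
  also have "\<dots> = nat N ^ CARD('d)" by (simp add: card_PiE)
  finally show ?thesis .
qed

section \<open>Dirichlet energy and summation by parts\<close>

definition bond_energy :: "(int^'d::finite) set \<Rightarrow> (int^'d \<Rightarrow> complex) \<Rightarrow> 'd \<Rightarrow> int^'d \<Rightarrow> real"
  where "bond_energy S f \<mu> x = (if x + unitv \<mu> \<in> S then (cmod (f (x + unitv \<mu>) - f x))\<^sup>2 else 0)"

definition dirichlet_energy :: "(int^'d::finite) set \<Rightarrow> (int^'d \<Rightarrow> complex) \<Rightarrow> real"
  where "dirichlet_energy S f = (\<Sum>\<mu>\<in>UNIV. \<Sum>x\<in>S. bond_energy S f \<mu> x)"

lemma bond_energy_nonneg: "bond_energy S f \<mu> x \<ge> 0"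
  by (simp add: bond_energy_def)

lemma bond_energy_mono: "B \<subseteq> S \<Longrightarrow> bond_energy B f \<mu> x \<le> bond_energy S f \<mu> x"
  by (auto simp: bond_energy_def)

lemma dirichlet_energy_nonneg: "dirichlet_energy S f \<ge> 0"
  unfolding dirichlet_energy_def by (intro sum_nonneg bond_energy_nonneg)

lemma sum_bond_energy_le_dirichlet_energy: "(\<Sum>x\<in>S. bond_energy S f \<mu> x) \<le> dirichlet_energy S f"
  unfolding dirichlet_energy_def
  by (rule member_le_sum[of \<mu> UNIV "\<lambda>\<mu>. \<Sum>x\<in>S. bond_energy S f \<mu> x"])
    (auto intro: sum_nonneg bond_energy_nonneg)

lemma sum_dirichlet_energy_le_Union:
  assumes "finite P" and "\<And>p. p \<in> P \<Longrightarrow> finite (B p)" and "disjoint_family_on B P"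
  shows "(\<Sum>p\<in>P. dirichlet_energy (B p) f) \<le> dirichlet_energy (\<Union>p\<in>P. B p) f"
proof -
  let ?S = "\<Union>p\<in>P. B p"
  have "(\<Sum>p\<in>P. dirichlet_energy (B p) f) = (\<Sum>\<mu>\<in>UNIV. \<Sum>p\<in>P. \<Sum>x\<in>B p. bond_energy (B p) f \<mu> x)"
    unfolding dirichlet_energy_def by (rule sum.swap)
  also have "\<dots> \<le> (\<Sum>\<mu>\<in>UNIV. \<Sum>p\<in>P. \<Sum>x\<in>B p. bond_energy ?S f \<mu> x)"
    by (intro sum_mono bond_energy_mono) auto
  also have "\<dots> = dirichlet_energy ?S f"
    unfolding dirichlet_energy_def
    by (intro sum.cong refl sum.UNION_disjoint_family[symmetric]) (use assms in auto)
  finally show ?thesis .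
qed

lemma sum_shift:
  fixes G :: "int^'d::finite \<Rightarrow> int^'d \<Rightarrow> complex"
  assumes "finite S"
  shows "(\<Sum>x\<in>S. if x - e \<in> S then G x (x - e) else 0) = (\<Sum>y\<in>S. if y + e \<in> S then G (y + e) y else 0)"
proof -
  have "(\<Sum>x\<in>S. if x - e \<in> S then G x (x - e) else 0) = (\<Sum>x\<in>{x\<in>S. x - e \<in> S}. G x (x - e))"
    using assms by (simp add: sum.inter_filter)
  also have "\<dots> = (\<Sum>y\<in>{y\<in>S. y + e \<in> S}. G (y + e) y)"
    by (rule sum.reindex_bij_witness[where i="\<lambda>y. y + e" and j="\<lambda>x. x - e"]) auto
  also have "\<dots> = (\<Sum>y\<in>S. if y + e \<in> S then G (y + e) y else 0)"
    using assms by (simp add: sum.inter_filter)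
  finally show ?thesis .
qed

lemma cnj_mult_self: "cnj z * z = complex_of_real ((cmod z)\<^sup>2)"
  by (subst complex_norm_square) (rule mult.commute)

lemma neumann_second_difference_form:
  fixes f :: "int^'d::finite \<Rightarrow> complex"
  assumes S: "finite S"
  shows "(\<Sum>x\<in>S. cnj (f x) * ((if x + unitv \<mu> \<in> S then f (x + unitv \<mu>) else f x) - 2 * f x
            + (if x - unitv \<mu> \<in> S then f (x - unitv \<mu>) else f x)))
       = - complex_of_real (\<Sum>x\<in>S. bond_energy S f \<mu> x)"
proof -
  let ?e = "unitv \<mu>"
  define fwd where "fwd x = (if x + ?e \<in> S then cnj (f x) * (f (x + ?e) - f x) else 0)" for x
  define bwd where "bwd x = (if x - ?e \<in> S then cnj (f x) * (f (x - ?e) - f x) else 0)" for x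
  have "(\<Sum>x\<in>S. bwd x) = (\<Sum>x\<in>S. if x + ?e \<in> S then cnj (f (x + ?e)) * (f x - f (x + ?e)) else 0)"
    unfolding bwd_def by (rule sum_shift[OF S])
  moreover
  \<comment> \<open>Each bond \<open>{x, x+e}\<close> contributes once forward and once backward, together \<open>-|f(x+e) - f x|\<^sup>2\<close>.\<close>
  have "fwd x + (if x + ?e \<in> S then cnj (f (x + ?e)) * (f x - f (x + ?e)) else 0)
      = - complex_of_real (bond_energy S f \<mu> x)" for x
  proof (cases "x + ?e \<in> S")
    case True
    let ?a = "f x" and ?b = "f (x + ?e)"
    have "fwd x + (if x + ?e \<in> S then cnj ?b * (?a - ?b) else 0) = cnj ?a * (?b - ?a) + cnj ?b * (?a - ?b)"
      using True by (simp add: fwd_def)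
    also have "\<dots> = - (cnj (?b - ?a) * (?b - ?a))"
      by (simp add: algebra_simps)
    also have "\<dots> = - complex_of_real (bond_energy S f \<mu> x)"
      using True by (simp only: cnj_mult_self bond_energy_def if_True)
    finally show ?thesis .
  qed (simp add: fwd_def bond_energy_def)
  ultimately have "(\<Sum>x\<in>S. fwd x) + (\<Sum>x\<in>S. bwd x) = - complex_of_real (\<Sum>x\<in>S. bond_energy S f \<mu> x)"
    by (simp add: sum_negf flip: sum.distrib)
  moreover have "cnj (f x) * ((if x + ?e \<in> S then f (x + ?e) else f x) - 2 * f x
            + (if x - ?e \<in> S then f (x - ?e) else f x)) = fwd x + bwd x" for x
    by (simp add: fwd_def bwd_def algebra_simps)
  ultimately show ?thesis by (simp add: sum.distrib)
qed

lemma neumann_lap_form: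
  fixes f :: "int^'d::finite \<Rightarrow> complex"
  assumes "finite S"
  shows "(\<Sum>x\<in>S. cnj (f x) * neumann_lap \<eta> S f x)
       = - complex_of_real (\<eta> powi (-2) * dirichlet_energy S f)"
proof -
  have "(\<Sum>x\<in>S. cnj (f x) * neumann_lap \<eta> S f x)
      = complex_of_real (\<eta> powi (-2)) * (\<Sum>\<mu>\<in>UNIV. \<Sum>x\<in>S. cnj (f x) *
          ((if x + unitv \<mu> \<in> S then f (x + unitv \<mu>) else f x) - 2 * f x
            + (if x - unitv \<mu> \<in> S then f (x - unitv \<mu>) else f x)))"
    unfolding neumann_lap_def
    by (simp add: sum_distrib_left mult.left_commute sum.swap[of _ S UNIV])
  also have "\<dots> = - complex_of_real (\<eta> powi (-2) * dirichlet_energy S f)"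
    by (simp add: neumann_second_difference_form[OF assms] dirichlet_energy_def sum_negf)
  finally show ?thesis .
qed

section \<open>The discrete Poincare inequality on a box\<close>

definition upd_coord :: "int^'d::finite \<Rightarrow> 'd \<Rightarrow> int \<Rightarrow> int^'d"
  where "upd_coord z j s = (\<chi> i. if i = j then s else z$i)"

definition line_energy :: "int^'d::finite \<Rightarrow> int \<Rightarrow> (int^'d \<Rightarrow> complex) \<Rightarrow> 'd \<Rightarrow> int^'d \<Rightarrow> real"
  where "line_energy u N f j z = (\<Sum>s\<in>{u$j..<u$j+N}. bond_energy (ibox u N) f j (upd_coord z j s))"

lemma upd_coord_nth [simp]: "upd_coord z j s $ i = (if i = j then s else z$i)"
  by (simp add: upd_coord_def)

lemma upd_coord_upd_coord [simp]: "upd_coord (upd_coord z j s) j t = upd_coord z j t"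
  by (simp add: vec_eq_iff)

lemma upd_coord_same [simp]: "upd_coord z j (z$j) = z"
  by (simp add: vec_eq_iff)

lemma upd_coord_plus_unitv: "upd_coord z j s + unitv j = upd_coord z j (s + 1)"
  by (simp add: vec_eq_iff unitv_def)

lemma ibox_nth_mem: "z \<in> ibox u N \<Longrightarrow> z$j \<in> {u$j..<u$j+N}"
  by (simp add: ibox_def)

lemma upd_coord_in_ibox: "z \<in> ibox u N \<Longrightarrow> s \<in> {u$j..<u$j+N} \<Longrightarrow> upd_coord z j s \<in> ibox u N"
  by (auto simp: ibox_def)

lemma line_energy_upd_coord [simp]: "line_energy u N f j (upd_coord z j t) = line_energy u N f j z"
  by (simp add: line_energy_def)

lemma line_diff_sq_le_ordered:
  assumes z: "z \<in> ibox u N" and s: "s \<in> {u$j..<u$j+N}" and t: "t \<in> {u$j..<u$j+N}"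
    and "s \<le> t"
  shows "(cmod (f (upd_coord z j t) - f (upd_coord z j s)))\<^sup>2 \<le> of_int N * line_energy u N f j z"
proof -
  define n where "n = nat (t - s)"
  have tn: "t = s + int n" using \<open>s \<le> t\<close> by (simp add: n_def)
  define d where "d i = f (upd_coord z j (s + int (Suc i))) - f (upd_coord z j (s + int i))" for i
  have telescope: "f (upd_coord z j t) - f (upd_coord z j s) = (\<Sum>i<n. d i)"
    using sum_lessThan_telescope[of "\<lambda>i. f (upd_coord z j (s + int i))" n] by (simp add: d_def tn)
  have bond: "bond_energy (ibox u N) f j (upd_coord z j (s + int i)) = (cmod (d i))\<^sup>2" if "i < n" for i
  proof -
    have "upd_coord z j (s + int (Suc i)) \<in> ibox u N"
      using that s t tn by (intro upd_coord_in_ibox[OF z]) auto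
    then show ?thesis
      using upd_coord_plus_unitv[of z j "s + int i"] by (simp add: bond_energy_def d_def add_ac)
  qed
  have "(cmod (\<Sum>i<n. d i))\<^sup>2 \<le> (\<Sum>i<n. cmod (d i))\<^sup>2"
    by (simp add: norm_sum power_mono)
  also have "\<dots> \<le> real n * (\<Sum>i<n. (cmod (d i))\<^sup>2)"
    using sum_squared_le_sum_of_squares[of "\<lambda>i. cmod (d i)" "{..<n}"] by (simp add: mult.commute)
  also have "\<dots> \<le> of_int N * line_energy u N f j z"
  proof (rule mult_mono)
    show "real n \<le> of_int N" using s t tn by auto
    have "(\<Sum>i<n. (cmod (d i))\<^sup>2) = (\<Sum>r\<in>(\<lambda>i. s + int i) ` {..<n}. bond_energy (ibox u N) f j (upd_coord z j r))"
      by (simp add: sum.reindex inj_on_def bond)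
    also have "\<dots> \<le> line_energy u N f j z"
      unfolding line_energy_def
      by (rule sum_mono2[OF finite_atLeastLessThan_int _ bond_energy_nonneg]) (use s t tn in auto)
    finally show "(\<Sum>i<n. (cmod (d i))\<^sup>2) \<le> line_energy u N f j z" .
  qed (use s in \<open>auto intro: sum_nonneg\<close>)
  finally show ?thesis unfolding telescope .
qed

lemma line_diff_sq_le:
  assumes z: "z \<in> ibox u N" and t: "t \<in> {u$j..<u$j+N}"
  shows "(cmod (f z - f (upd_coord z j t)))\<^sup>2 \<le> of_int N * line_energy u N f j z"
proof -
  have zj: "z$j \<in> {u$j..<u$j+N}" using z by (rule ibox_nth_mem)
  show ?thesis
  proof (cases "z$j \<le> t")
    case True
    then show ?thesis
      using line_diff_sq_le_ordered[OF z zj t, of f] by (simp add: norm_minus_commute)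
  next
    case False
    then show ?thesis
      using line_diff_sq_le_ordered[OF upd_coord_in_ibox[OF z t] t zj, of f] by simp
  qed
qed

definition mix_coords :: "'d::finite set \<Rightarrow> int^'d \<Rightarrow> int^'d \<Rightarrow> int^'d"
  where "mix_coords J x y = (\<chi> i. if i \<in> J then y$i else x$i)"

lemma mix_coords_nth [simp]: "mix_coords J x y $ i = (if i \<in> J then y$i else x$i)"
  by (simp add: mix_coords_def)

lemma mix_coords_in_ibox: "x \<in> ibox u N \<Longrightarrow> y \<in> ibox u N \<Longrightarrow> mix_coords J x y \<in> ibox u N"
  by (auto simp: ibox_def)

lemma mix_coords_swap [simp]:
  "mix_coords J (mix_coords J x y) (mix_coords J y x) = x"
  "mix_coords J (mix_coords J y x) (mix_coords J x y) = y"
  by (simp_all add: vec_eq_iff)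

lemma mix_coords_UNIV [simp]: "mix_coords UNIV x y = y"
  by (simp add: vec_eq_iff)

lemma mix_coords_empty [simp]: "mix_coords {} x y = x"
  by (simp add: vec_eq_iff)

lemma mix_coords_insert: "mix_coords (insert j J) x y = upd_coord (mix_coords J x y) j (y$j)"
  by (simp add: vec_eq_iff)

lemma sum_sum_mix_coords:
  fixes g :: "int^'d::finite \<Rightarrow> real"
  shows "(\<Sum>x\<in>ibox u N. \<Sum>y\<in>ibox u N. g (mix_coords J x y)) = real (card (ibox u N)) * (\<Sum>z\<in>ibox u N. g z)"
proof -
  let ?B = "ibox u N"
  let ?swap = "\<lambda>p. (mix_coords J (fst p) (snd p), mix_coords J (snd p) (fst p))"
  have "(\<Sum>x\<in>?B. \<Sum>y\<in>?B. g (mix_coords J x y)) = (\<Sum>p\<in>?B \<times> ?B. g (mix_coords J (fst p) (snd p)))"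
    by (simp add: sum.cartesian_product split_def)
  also have "\<dots> = (\<Sum>p\<in>?B \<times> ?B. g (fst p))"
    by (rule sum.reindex_bij_witness[where i="?swap" and j="?swap"]) (auto simp: mix_coords_in_ibox)
  also have "\<dots> = real (card ?B) * (\<Sum>z\<in>?B. g z)"
    by (simp add: sum.cartesian_product' sum_distrib_left)
  finally show ?thesis .
qed

lemma sum_sum_upd_coord:
  fixes h :: "int^'d::finite \<Rightarrow> real"
  shows "(\<Sum>z\<in>ibox u N. \<Sum>s\<in>{u$j..<u$j+N}. h (upd_coord z j s)) = real (nat N) * (\<Sum>z\<in>ibox u N. h z)"
proof -
  let ?B = "ibox u N" and ?I = "{u$j..<u$j+N}"
  let ?swap = "\<lambda>p. (upd_coord (fst p) j (snd p), fst p $ j)"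
  have "(\<Sum>z\<in>?B. \<Sum>s\<in>?I. h (upd_coord z j s)) = (\<Sum>p\<in>?B \<times> ?I. h (upd_coord (fst p) j (snd p)))"
    by (simp add: sum.cartesian_product split_def)
  also have "\<dots> = (\<Sum>p\<in>?B \<times> ?I. h (fst p))"
    by (rule sum.reindex_bij_witness[where i="?swap" and j="?swap"]) (auto simp: upd_coord_in_ibox dest: ibox_nth_mem)
  also have "\<dots> = real (nat N) * (\<Sum>z\<in>?B. h z)"
    by (simp add: sum.cartesian_product' sum_distrib_left)
  finally show ?thesis .
qed

lemma cmod_diff_sq_le: "(cmod (a - c))\<^sup>2 \<le> 2 * (cmod (a - b))\<^sup>2 + 2 * (cmod (b - c))\<^sup>2"
proof -
  let ?p = "cmod (a - b)" and ?q = "cmod (b - c)"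
  have "cmod (a - c) \<le> ?p + ?q" using norm_triangle_ineq[of "a - b" "b - c"] by simp
  then have "(cmod (a - c))\<^sup>2 \<le> (?p + ?q)\<^sup>2" by (simp add: power_mono)
  also have "\<dots> \<le> 2 * ?p\<^sup>2 + 2 * ?q\<^sup>2"
    using sum_squares_bound[of ?p ?q] unfolding power2_sum by linarith
  finally show ?thesis .
qed

lemma sum_sum_mix_coords_diff_sq_le:
  fixes f :: "int^'d::finite \<Rightarrow> complex"
  assumes "finite J" and N: "N > 0"
  shows "(\<Sum>x\<in>ibox u N. \<Sum>y\<in>ibox u N. (cmod (f x - f (mix_coords J x y)))\<^sup>2)
     \<le> 4 ^ card J * ((of_int N)\<^sup>2 * real (card (ibox u N)) * dirichlet_energy (ibox u N) f)"
  using assms(1)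
proof (induction J rule: finite_induct)
  case empty
  then show ?case by (simp add: dirichlet_energy_nonneg)
next
  case (insert j J)
  let ?B = "ibox u N"
  let ?X = "(of_int N)\<^sup>2 * real (card ?B) * dirichlet_energy ?B f"
  let ?step = "\<lambda>x y. (cmod (f (mix_coords J x y) - f (upd_coord (mix_coords J x y) j (y$j))))\<^sup>2"
  have X0: "?X \<ge> 0" by (simp add: dirichlet_energy_nonneg)
  have "(\<Sum>x\<in>?B. \<Sum>y\<in>?B. ?step x y) \<le> (\<Sum>x\<in>?B. \<Sum>y\<in>?B. of_int N * line_energy u N f j (mix_coords J x y))"
    by (intro sum_mono line_diff_sq_le mix_coords_in_ibox) (auto simp: ibox_def)
  also have "\<dots> = of_int N * real (card ?B) * (\<Sum>z\<in>?B. line_energy u N f j z)"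
    by (simp add: sum_sum_mix_coords mult.assoc flip: sum_distrib_left)
  also have "\<dots> = (of_int N)\<^sup>2 * real (card ?B) * (\<Sum>z\<in>?B. bond_energy ?B f j z)"
    using sum_sum_upd_coord[where h="bond_energy ?B f j" and u=u and N=N and j=j] N
    by (simp add: line_energy_def power2_eq_square)
  also have "\<dots> \<le> ?X"
    by (intro mult_left_mono sum_bond_energy_le_dirichlet_energy) auto
  finally have step: "(\<Sum>x\<in>?B. \<Sum>y\<in>?B. ?step x y) \<le> ?X" .
  have "(\<Sum>x\<in>?B. \<Sum>y\<in>?B. (cmod (f x - f (mix_coords (insert j J) x y)))\<^sup>2)
     \<le> (\<Sum>x\<in>?B. \<Sum>y\<in>?B. 2 * (cmod (f x - f (mix_coords J x y)))\<^sup>2 + 2 * ?step x y)"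
    unfolding mix_coords_insert by (intro sum_mono cmod_diff_sq_le)
  also have "\<dots> = 2 * (\<Sum>x\<in>?B. \<Sum>y\<in>?B. (cmod (f x - f (mix_coords J x y)))\<^sup>2) + 2 * (\<Sum>x\<in>?B. \<Sum>y\<in>?B. ?step x y)"
    by (simp add: sum.distrib sum_distrib_left)
  also have "\<dots> \<le> 2 * (4 ^ card J * ?X) + 2 * ?X"
    using insert.IH step by linarith
  also have "\<dots> \<le> 4 ^ card (insert j J) * ?X"
  proof -
    have "1 * ?X \<le> 4 ^ card J * ?X" using X0 by (intro mult_right_mono) simp_all
    then have "2 * (4 ^ card J * ?X) + 2 * ?X \<le> 4 * (4 ^ card J * ?X)" by linarith
    also have "\<dots> = 4 ^ card (insert j J) * ?X" using insert.hyps by simp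
    finally show ?thesis .
  qed
  finally show ?case .
qed

lemma sum_sum_cmod_diff_sq:
  fixes f :: "'a \<Rightarrow> complex"
  shows "(\<Sum>x\<in>B. \<Sum>y\<in>B. (cmod (f x - f y))\<^sup>2)
       = 2 * real (card B) * (\<Sum>x\<in>B. (cmod (f x))\<^sup>2) - 2 * (cmod (\<Sum>x\<in>B. f x))\<^sup>2"
proof -
  have expand: "(cmod (a - b))\<^sup>2 = (cmod a)\<^sup>2 + (cmod b)\<^sup>2 - 2 * Re (cnj a * b)" for a b :: complex
    unfolding cmod_power2 by (simp add: power2_eq_square algebra_simps)
  have cross: "(\<Sum>x\<in>B. \<Sum>y\<in>B. Re (cnj (f x) * f y)) = (cmod (\<Sum>x\<in>B. f x))\<^sup>2"
  proof -
    have "(\<Sum>x\<in>B. \<Sum>y\<in>B. Re (cnj (f x) * f y)) = Re (\<Sum>x\<in>B. \<Sum>y\<in>B. cnj (f x) * f y)"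
      by (simp only: Re_sum)
    also have "\<dots> = Re (cnj (\<Sum>x\<in>B. f x) * (\<Sum>x\<in>B. f x))"
      by (simp add: sum_product cnj_sum)
    finally show ?thesis by (simp only: cnj_mult_self Re_complex_of_real)
  qed
  have "(\<Sum>x\<in>B. \<Sum>y\<in>B. (cmod (f x - f y))\<^sup>2)
     = (\<Sum>x\<in>B. \<Sum>y\<in>B. (cmod (f x))\<^sup>2) + (\<Sum>x\<in>B. \<Sum>y\<in>B. (cmod (f y))\<^sup>2)
      - 2 * (\<Sum>x\<in>B. \<Sum>y\<in>B. Re (cnj (f x) * f y))"
    by (simp only: expand sum.distrib sum_subtractf sum_distrib_left[symmetric])
  also have "\<dots> = 2 * real (card B) * (\<Sum>x\<in>B. (cmod (f x))\<^sup>2) - 2 * (cmod (\<Sum>x\<in>B. f x))\<^sup>2"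
    unfolding cross by (simp add: sum_distrib_left mult.assoc)
  finally show ?thesis .
qed

theorem poincare_ibox:
  fixes f :: "int^'d::finite \<Rightarrow> complex"
  assumes N: "N > 0"
  shows "(\<Sum>x\<in>ibox u N. (cmod (f x))\<^sup>2)
    \<le> (cmod (\<Sum>x\<in>ibox u N. f x))\<^sup>2 / real (card (ibox u N))
       + 4 ^ CARD('d) / 2 * (of_int N)\<^sup>2 * dirichlet_energy (ibox u N) f"
proof -
  let ?C = "real (card (ibox u N))" and ?X = "\<Sum>x\<in>ibox u N. (cmod (f x))\<^sup>2"
  let ?T = "(cmod (\<Sum>x\<in>ibox u N. f x))\<^sup>2"
  let ?K = "4 ^ CARD('d) / 2 * (of_int N)\<^sup>2 * dirichlet_energy (ibox u N) f"
  have C: "?C > 0" using N by (simp add: card_ibox)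
  have "(\<Sum>x\<in>ibox u N. \<Sum>y\<in>ibox u N. (cmod (f x - f y))\<^sup>2)
     \<le> 4 ^ CARD('d) * ((of_int N)\<^sup>2 * ?C * dirichlet_energy (ibox u N) f)"
    using sum_sum_mix_coords_diff_sq_le[where J=UNIV and N=N and u=u and f=f] N by simp
  then have "2 * ?C * ?X - 2 * ?T \<le> 2 * (?C * ?K)"
    by (simp only: sum_sum_cmod_diff_sq) (simp add: algebra_simps)
  then have "?C * ?X \<le> ?C * (?T / ?C + ?K)"
    using C by (simp add: distrib_left)
  then show ?thesis using C by simp
qed

lemma int_div_eq_iff:
  fixes x q N :: int
  assumes "N > 0"
  shows "x div N = q \<longleftrightarrow> N * q \<le> x \<and> x < N * q + N"
proof
  assume "x div N = q"
  then have "N * q + x mod N = x" using mult_div_mod_eq[of N x] by simp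
  then show "N * q \<le> x \<and> x < N * q + N"
    using pos_mod_sign[OF assms, of x] pos_mod_bound[OF assms, of x] by linarith
next
  assume "N * q \<le> x \<and> x < N * q + N"
  then show "x div N = q" by (intro int_div_pos_eq[of x N q "x - N * q"]) auto
qed

lemma int_div_less_iff:
  fixes x M N :: int
  assumes "N > 0"
  shows "x div N < M \<longleftrightarrow> x < N * M"
proof -
  have bounds: "N * (x div N) \<le> x" "x < N * (x div N) + N"
    using int_div_eq_iff[OF assms, of x "x div N"] by simp_all
  show ?thesis
  proof (cases "x div N < M")
    case True
    then have "N * (x div N + 1) \<le> N * M" using assms by (simp add: mult_left_mono)
    then show ?thesis using True bounds by (simp add: distrib_left)
  next
    case False
    then have "N * M \<le> N * (x div N)" using assms by (simp add: mult_left_mono)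
    then have "\<not> x < N * M" using bounds by linarith
    then show ?thesis using False by simp
  qed
qed

lemma unit_box_iff_div:
  assumes "L > 0"
  shows "x \<in> unit_box L k p \<longleftrightarrow> (\<forall>\<mu>. x$\<mu> div int L ^ k = p$\<mu>)"
proof -
  have N: "int L ^ k > 0" using assms by simp
  have "int L ^ k * p$\<mu> \<le> x$\<mu> \<and> x$\<mu> < int L ^ k * p$\<mu> + int L ^ k \<longleftrightarrow> x$\<mu> div int L ^ k = p$\<mu>" for \<mu>
    by (rule int_div_eq_iff[OF N, symmetric])
  then show ?thesis by (simp add: unit_box_def blockB_def ibox_def)
qed

lemma finite_unit_box [simp]: "finite (unit_box L k p)"
  by (simp add: unit_box_def blockB_def)

lemma card_unit_box: "card (unit_box L k (p::int^'d::finite)) = (L ^ k) ^ CARD('d)"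
  by (simp add: unit_box_def blockB_def card_ibox nat_power_eq)

lemma disjoint_family_unit_box:
  assumes "L > 0"
  shows "disjoint_family_on (unit_box L k) P"
  unfolding disjoint_family_on_def
proof (intro ballI impI)
  fix p q :: "int^'d::finite"
  assume "p \<noteq> q"
  then obtain \<mu> where "p$\<mu> \<noteq> q$\<mu>" by (auto simp: vec_eq_iff)
  show "unit_box L k p \<inter> unit_box L k q = {}"
  proof (rule equals0I)
    fix x assume "x \<in> unit_box L k p \<inter> unit_box L k q"
    then have "x \<in> unit_box L k p" and "x \<in> unit_box L k q" by simp_all
    then show False
      using \<open>p$\<mu> \<noteq> q$\<mu>\<close> unfolding unit_box_iff_div[OF assms] by metis
  qed
qed

lemma OmegaI_eq_Union_unit_box:
  assumes L: "L > 0" and "k \<le> m"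
  shows "OmegaI L m = (\<Union>p\<in>ibox 0 (int L ^ (m - k)). unit_box L k p)"
proof -
  let ?N = "int L ^ k" and ?M = "int L ^ (m - k)"
  let ?block = "\<lambda>x::int^'a. \<chi> \<mu>. x$\<mu> div ?N"
  have N: "?N > 0" using L by simp
  have mem: "x \<in> unit_box L k p \<longleftrightarrow> p = ?block x" for x p :: "int^'a"
    using L by (auto simp: unit_box_iff_div vec_eq_iff)
  have "(\<Union>p\<in>ibox 0 ?M. unit_box L k p) = {x. ?block x \<in> ibox 0 ?M}"
    by (auto simp: mem)
  also have "\<dots> = ibox 0 (?N * ?M)"
    by (auto simp: ibox_def pos_imp_zdiv_nonneg_iff[OF N] int_div_less_iff[OF N])
  also have "?N * ?M = int L ^ m"
    using assms(2) by (simp flip: power_add)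
  finally show ?thesis by (simp add: OmegaI_def)
qed

lemma sum_Union_unit_box:
  assumes "L > 0" and "finite P"
  shows "sum g (\<Union>p\<in>P. unit_box L k p) = (\<Sum>p\<in>P. sum g (unit_box L k p))"
  by (rule sum.UNION_disjoint_family) (use assms disjoint_family_unit_box in auto)

lemma avg_form_unit_box:
  fixes f :: "int^'d::finite \<Rightarrow> complex"
  assumes L: "L > 0" and sub: "unit_box L k p \<subseteq> S"
  shows "Re (\<Sum>x\<in>unit_box L k p. cnj (f x) * adjQ L k (avgQ L k S f) x)
     = (cmod (\<Sum>y\<in>unit_box L k p. f y))\<^sup>2 / (real L ^ k) ^ CARD('d)"
proof -
  let ?B = "unit_box L k p" and ?T = "\<Sum>y\<in>unit_box L k p. f y"
  \<comment> \<open>\<open>Q\<^sup>*Q f\<close> is constant on the box, equal to the average of \<open>f\<close> over it.\<close>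
  have "adjQ L k (avgQ L k S f) x = complex_of_real (1 / real L ^ (k * CARD('d))) * ?T" if "x \<in> ?B" for x
  proof -
    have "corner L k x = int L ^ k *s p"
      using that L by (simp add: corner_def vec_eq_iff unit_box_iff_div)
    then show ?thesis using sub by (simp add: adjQ_def avgQ_def unit_box_def)
  qed
  then have "(\<Sum>x\<in>?B. cnj (f x) * adjQ L k (avgQ L k S f) x)
      = (\<Sum>x\<in>?B. cnj (f x)) * (complex_of_real (1 / real L ^ (k * CARD('d))) * ?T)"
    by (simp only: sum_distrib_right cong: sum.cong)
  also have "\<dots> = complex_of_real (1 / real L ^ (k * CARD('d)) * (cmod ?T)\<^sup>2)"
    by (simp only: cnj_sum[symmetric] mult.left_commute[of "cnj ?T"] cnj_mult_self of_real_mult)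
  finally show ?thesis by (simp add: power_mult)
qed

section \<open>Coercivity\<close>

lemma lattice_spacing_powi: "real L powi (- int k) = 1 / real L ^ k"
  by (simp add: power_int_minus power_int_of_nat divide_inverse)

lemma lattice_spacing_powi_minus_two: "(real L powi (- int k)) powi (-2) = (real L ^ k)\<^sup>2"
  by (simp add: lattice_spacing_powi power_int_minus power_one_over power_inverse)

lemma a_seq_ge:
  assumes L: "L \<ge> 2" and k: "k \<ge> 1" and a: "a \<ge> 0"
  shows "a_seq a L k \<ge> 3 * a / 4"
proof -
  have "- 2 * int k = - int (2 * k)" by simp
  then have a_seq: "a_seq a L k = a * (1 - 1 / real L ^ 2) / (1 - 1 / real L ^ (2 * k))"
    using lattice_spacing_powi[of L 2] lattice_spacing_powi[of L "2 * k"] by (simp add: a_seq_def)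
  have "real L ^ 2 \<ge> 2 ^ 2" using L by (intro power_mono) auto
  then have "1 / real L ^ 2 \<le> 1 / 4" by (intro divide_left_mono) (use L in auto)
  then have "a * (3 / 4) \<le> a * (1 - 1 / real L ^ 2)" using a by (intro mult_left_mono) auto
  then have num: "3 * a / 4 \<le> a * (1 - 1 / real L ^ 2)" by simp
  have "real L ^ (2 * k) > 1" using L k by (intro one_less_power) auto
  then have den: "0 < 1 - 1 / real L ^ (2 * k)" "1 - 1 / real L ^ (2 * k) \<le> 1"
    by (simp_all add: divide_less_eq)
  have "a * (1 - 1 / real L ^ 2) / 1 \<le> a * (1 - 1 / real L ^ 2) / (1 - 1 / real L ^ (2 * k))"
    using num a den by (intro divide_left_mono) (auto intro: order_trans[OF _ num])
  then have "a * (1 - 1 / real L ^ 2) \<le> a * (1 - 1 / real L ^ 2) / (1 - 1 / real L ^ (2 * k))"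
    by simp
  then show ?thesis unfolding a_seq using num by linarith
qed

lemma lat_inner_opA:
  fixes f :: "int^'d::finite \<Rightarrow> complex" and L k :: nat
  defines "\<eta> \<equiv> real L powi (- int k)"
  assumes "finite S"
  shows "Re (lat_inner \<eta> S f (opA a \<mu>0 L k S f))
    = \<eta> ^ CARD('d) * (\<eta> powi (-2) * dirichlet_energy S f + mu_seq \<mu>0 L k * (\<Sum>x\<in>S. (cmod (f x))\<^sup>2)
        + a_seq a L k * Re (\<Sum>x\<in>S. cnj (f x) * adjQ L k (avgQ L k S f) x))"
proof -
  have "(\<Sum>x\<in>S. cnj (f x) * opA a \<mu>0 L k S f x)
     = - (\<Sum>x\<in>S. cnj (f x) * neumann_lap \<eta> S f x)
       + complex_of_real (mu_seq \<mu>0 L k) * (\<Sum>x\<in>S. cnj (f x) * f x)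
       + complex_of_real (a_seq a L k) * (\<Sum>x\<in>S. cnj (f x) * adjQ L k (avgQ L k S f) x)"
  proof -
    have "(\<Sum>x\<in>S. cnj (f x) * opA a \<mu>0 L k S f x) = (\<Sum>x\<in>S. - (cnj (f x) * neumann_lap \<eta> S f x)
       + complex_of_real (mu_seq \<mu>0 L k) * (cnj (f x) * f x)
       + complex_of_real (a_seq a L k) * (cnj (f x) * adjQ L k (avgQ L k S f) x))"
      unfolding opA_def \<eta>_def by (intro sum.cong refl) (simp add: algebra_simps)
    then show ?thesis by (simp only: sum.distrib sum_negf sum_distrib_left)
  qed
  then show ?thesis
    by (simp add: lat_inner_def neumann_lap_form[OF assms(2)] cnj_mult_self del: of_real_power_int flip: of_real_sum)
qed

lemma lat_inner_opB:
  fixes f :: "int^'d::finite \<Rightarrow> complex" and L k :: nat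
  defines "\<eta> \<equiv> real L powi (- int k)"
  assumes "finite S"
  shows "Re (lat_inner \<eta> S f (opB L k S f))
    = \<eta> ^ CARD('d) * (\<eta> powi (-2) * dirichlet_energy S f + (\<Sum>x\<in>S. (cmod (f x))\<^sup>2))"
proof -
  have "(\<Sum>x\<in>S. cnj (f x) * opB L k S f x)
     = - (\<Sum>x\<in>S. cnj (f x) * neumann_lap \<eta> S f x) + (\<Sum>x\<in>S. cnj (f x) * f x)"
  proof -
    have "(\<Sum>x\<in>S. cnj (f x) * opB L k S f x)
        = (\<Sum>x\<in>S. - (cnj (f x) * neumann_lap \<eta> S f x) + cnj (f x) * f x)"
      unfolding opB_def \<eta>_def by (intro sum.cong refl) (simp add: algebra_simps)
    then show ?thesis by (simp only: sum.distrib sum_negf)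
  qed
  then show ?thesis
    by (simp add: lat_inner_def neumann_lap_form[OF assms(2)] cnj_mult_self del: of_real_power_int flip: of_real_sum)
qed

definition coercivity_const :: "real \<Rightarrow> nat \<Rightarrow> real"
  where "coercivity_const a d = (3 * a / 4) / (1 + 4 ^ d / 2)"

lemma coercivity_const_pos: "a > 0 \<Longrightarrow> coercivity_const a d > 0"
  by (simp add: coercivity_const_def add_pos_nonneg)

text \<open>The elementary inequality behind the coercivity: \<open>w E\<close>, \<open>X\<close> and \<open>Y\<close> stand for the
  kinetic term, the mass and the averaged mass, and \<open>P\<close> is the Poincare inequality.\<close>

lemma coercivity_combination:
  fixes w E X Y \<mu> b a K :: real
  assumes "w * E \<ge> 0" and "X \<ge> 0" and "Y \<ge> 0" and "\<mu> \<ge> 0"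
    and "b \<ge> a" and "a > 0" and "a \<le> 1" and "K \<ge> 0"
    and P: "X \<le> Y + K * (w * E)"
  shows "a / (1 + K) * (w * E + X) \<le> w * E + \<mu> * X + b * Y"
proof -
  define c where "c = a / (1 + K)"
  have c: "0 \<le> c" "c \<le> a" "c * (1 + K) = a"
    using assms by (simp_all add: c_def divide_le_eq)
  have "c * (w * E + X) \<le> c * (w * E + Y + K * (w * E))"
    using P c by (simp add: mult_left_mono)
  also have "\<dots> = c * (1 + K) * (w * E) + c * Y" by (simp add: algebra_simps)
  also have "\<dots> = a * (w * E) + c * Y" by (simp only: c(3))
  also have "\<dots> \<le> w * E + b * Y"
    using assms c by (intro add_mono mult_left_le_one_le mult_right_mono) auto
  also have "\<dots> \<le> w * E + \<mu> * X + b * Y" using assms by simp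
  finally show ?thesis by (simp add: c_def)
qed

lemma avg_form_Union_unit_box:
  fixes f :: "int^'d::finite \<Rightarrow> complex"
  assumes L: "L > 0" and P: "finite P" and S: "S = (\<Union>p\<in>P. unit_box L k p)"
  shows "Re (\<Sum>x\<in>S. cnj (f x) * adjQ L k (avgQ L k S f) x)
     = (\<Sum>p\<in>P. (cmod (\<Sum>y\<in>unit_box L k p. f y))\<^sup>2 / (real L ^ k) ^ CARD('d))"
proof -
  have "Re (\<Sum>x\<in>S. cnj (f x) * adjQ L k (avgQ L k S f) x)
      = (\<Sum>p\<in>P. Re (\<Sum>x\<in>unit_box L k p. cnj (f x) * adjQ L k (avgQ L k S f) x))"
    using sum_Union_unit_box[OF L P, of "\<lambda>x. cnj (f x) * adjQ L k (avgQ L k S f) x" k, folded S]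
    by (simp only: Re_sum)
  also have "\<dots> = (\<Sum>p\<in>P. (cmod (\<Sum>y\<in>unit_box L k p. f y))\<^sup>2 / (real L ^ k) ^ CARD('d))"
    by (intro sum.cong refl avg_form_unit_box[OF L]) (auto simp: S)
  finally show ?thesis .
qed

lemma poincare_unit_box:
  fixes f :: "int^'d::finite \<Rightarrow> complex"
  assumes "L > 0"
  shows "(\<Sum>x\<in>unit_box L k p. (cmod (f x))\<^sup>2)
    \<le> (cmod (\<Sum>x\<in>unit_box L k p. f x))\<^sup>2 / (real L ^ k) ^ CARD('d)
       + 4 ^ CARD('d) / 2 * ((real L ^ k)\<^sup>2 * dirichlet_energy (unit_box L k p) f)"
proof -
  have "real (card (unit_box L k p)) = (real L ^ k) ^ CARD('d)"
    by (simp add: card_unit_box)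
  moreover have "unit_box L k p = ibox (int L ^ k *s p) (int L ^ k)"
    by (simp add: unit_box_def blockB_def)
  ultimately show ?thesis
    using poincare_ibox[where N="int L ^ k" and u="int L ^ k *s p" and f=f] assms by (simp add: mult.assoc)
qed

lemma poincare_Union_unit_box:
  fixes f :: "int^'d::finite \<Rightarrow> complex"
  assumes L: "L > 0" and P: "finite P" and S: "S = (\<Union>p\<in>P. unit_box L k p)"
  shows "(\<Sum>x\<in>S. (cmod (f x))\<^sup>2)
    \<le> (\<Sum>p\<in>P. (cmod (\<Sum>y\<in>unit_box L k p. f y))\<^sup>2 / (real L ^ k) ^ CARD('d))
       + 4 ^ CARD('d) / 2 * ((real L ^ k)\<^sup>2 * dirichlet_energy S f)"
proof -
  let ?K = "4 ^ CARD('d) / 2 :: real" and ?w = "(real L ^ k)\<^sup>2"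
  have "(\<Sum>x\<in>S. (cmod (f x))\<^sup>2) = (\<Sum>p\<in>P. \<Sum>x\<in>unit_box L k p. (cmod (f x))\<^sup>2)"
    unfolding S by (rule sum_Union_unit_box[OF L P])
  also have "\<dots> \<le> (\<Sum>p\<in>P. (cmod (\<Sum>y\<in>unit_box L k p. f y))\<^sup>2 / (real L ^ k) ^ CARD('d)
      + ?K * (?w * dirichlet_energy (unit_box L k p) f))"
    by (intro sum_mono poincare_unit_box[OF L])
  also have "\<dots> = (\<Sum>p\<in>P. (cmod (\<Sum>y\<in>unit_box L k p. f y))\<^sup>2 / (real L ^ k) ^ CARD('d))
      + ?K * (?w * (\<Sum>p\<in>P. dirichlet_energy (unit_box L k p) f))"
    by (simp add: sum.distrib sum_distrib_left)
  also have "(\<Sum>p\<in>P. dirichlet_energy (unit_box L k p) f) \<le> dirichlet_energy S f"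
    unfolding S by (rule sum_dirichlet_energy_le_Union[OF P _ disjoint_family_unit_box[OF L]]) simp
  finally show ?thesis by (simp add: mult_left_mono)
qed

theorem coercive_on_Union_unit_box:
  fixes f :: "int^'d::finite \<Rightarrow> complex" and L k :: nat
  defines "\<eta> \<equiv> real L powi (- int k)"
  assumes L: "L \<ge> 2" and k: "k \<ge> 1" and a: "0 < a" "a \<le> 1" and \<mu>0: "\<mu>0 \<ge> 0"
    and P: "finite P" and S: "S = (\<Union>p\<in>P. unit_box L k p)"
  shows "Re (lat_inner \<eta> S f (opA a \<mu>0 L k S f))
     \<ge> coercivity_const a CARD('d) * Re (lat_inner \<eta> S f (opB L k S f))"
proof -
  let ?w = "(real L ^ k)\<^sup>2" and ?E = "dirichlet_energy S f" and ?X = "\<Sum>x\<in>S. (cmod (f x))\<^sup>2"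
  let ?Y = "\<Sum>p\<in>P. (cmod (\<Sum>y\<in>unit_box L k p. f y))\<^sup>2 / (real L ^ k) ^ CARD('d)"
  have L0: "L > 0" using L by simp
  have finS: "finite S" using P S by simp
  have w: "\<eta> powi (-2) = ?w" unfolding \<eta>_def by (rule lattice_spacing_powi_minus_two)
  have A: "Re (lat_inner \<eta> S f (opA a \<mu>0 L k S f))
      = \<eta> ^ CARD('d) * (?w * ?E + mu_seq \<mu>0 L k * ?X + a_seq a L k * ?Y)"
    unfolding \<eta>_def lat_inner_opA[OF finS] w[unfolded \<eta>_def] avg_form_Union_unit_box[OF L0 P S] ..
  have B: "Re (lat_inner \<eta> S f (opB L k S f)) = \<eta> ^ CARD('d) * (?w * ?E + ?X)"
    unfolding \<eta>_def lat_inner_opB[OF finS] w[unfolded \<eta>_def] ..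
  have "coercivity_const a CARD('d) * (?w * ?E + ?X) \<le> ?w * ?E + mu_seq \<mu>0 L k * ?X + a_seq a L k * ?Y"
    unfolding coercivity_const_def
  proof (rule coercivity_combination)
    show "?X \<le> ?Y + 4 ^ CARD('d) / 2 * (?w * ?E)" by (rule poincare_Union_unit_box[OF L0 P S])
    show "a_seq a L k \<ge> 3 * a / 4" using a by (intro a_seq_ge[OF L k]) simp
  qed (use a \<mu>0 in \<open>simp_all add: dirichlet_energy_nonneg sum_nonneg mu_seq_def\<close>)
  then have "\<eta> ^ CARD('d) * (coercivity_const a CARD('d) * (?w * ?E + ?X))
      \<le> \<eta> ^ CARD('d) * (?w * ?E + mu_seq \<mu>0 L k * ?X + a_seq a L k * ?Y)"
    by (rule mult_left_mono) (simp add: \<eta>_def lattice_spacing_powi)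
  then show ?thesis unfolding A B by (simp only: mult.left_commute)
qed

corollary coercive_on_unit_box:
  fixes f :: "int^'d::finite \<Rightarrow> complex" and L k :: nat
  defines "\<eta> \<equiv> real L powi (- int k)"
  assumes "L \<ge> 2" and "k \<ge> 1" and "0 < a" "a \<le> 1" and "\<mu>0 \<ge> 0"
  shows "Re (lat_inner \<eta> (unit_box L k p) f (opA a \<mu>0 L k (unit_box L k p) f))
     \<ge> coercivity_const a CARD('d) * Re (lat_inner \<eta> (unit_box L k p) f (opB L k (unit_box L k p) f))"
  unfolding \<eta>_def by (rule coercive_on_Union_unit_box[where P="{p}"]) (use assms in simp_all)

corollary coercive_on_OmegaI:
  fixes f :: "int^'d::finite \<Rightarrow> complex" and L k :: nat
  defines "\<eta> \<equiv> real L powi (- int k)"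
  assumes "L \<ge> 2" and "1 \<le> k" "k \<le> m" and "0 < a" "a \<le> 1" and "\<mu>0 \<ge> 0"
  shows "Re (lat_inner \<eta> (OmegaI L m) f (opA a \<mu>0 L k (OmegaI L m) f))
     \<ge> coercivity_const a CARD('d) * Re (lat_inner \<eta> (OmegaI L m) f (opB L k (OmegaI L m) f))"
  unfolding \<eta>_def using assms
  by (intro coercive_on_Union_unit_box[where P="ibox 0 (int L ^ (m - k))"] OmegaI_eq_Union_unit_box) simp_all

lemma opA_eq_zero_imp_zero:
  fixes f :: "int^'d::finite \<Rightarrow> complex" and L k :: nat
  defines "\<eta> \<equiv> real L powi (- int k)"
  assumes L: "L > 0" and "finite S" and c: "c > 0"
    and coercive: "Re (lat_inner \<eta> S f (opA a \<mu>0 L k S f)) \<ge> c * Re (lat_inner \<eta> S f (opB L k S f))"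
    and zero: "\<forall>x\<in>S. opA a \<mu>0 L k S f x = 0"
  shows "\<forall>x\<in>S. f x = 0"
proof -
  let ?E = "dirichlet_energy S f" and ?X = "\<Sum>x\<in>S. (cmod (f x))\<^sup>2"
  have h: "\<eta> ^ CARD('d) > 0" using L by (simp add: \<eta>_def lattice_spacing_powi)
  have "lat_inner \<eta> S f (opA a \<mu>0 L k S f) = 0"
    using zero by (simp add: lat_inner_def)
  then have "c * Re (lat_inner \<eta> S f (opB L k S f)) \<le> 0"
    using coercive by simp
  then have "Re (lat_inner \<eta> S f (opB L k S f)) \<le> 0"
    using c by (simp add: mult_le_0_iff)
  moreover have "Re (lat_inner \<eta> S f (opB L k S f)) = \<eta> ^ CARD('d) * (\<eta> powi (-2) * ?E + ?X)"
    unfolding \<eta>_def by (rule lat_inner_opB[OF \<open>finite S\<close>])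
  ultimately have "\<eta> ^ CARD('d) * (\<eta> powi (-2) * ?E + ?X) \<le> 0" by simp
  moreover have "\<eta> powi (-2) * ?E \<ge> 0"
    by (simp add: \<eta>_def lattice_spacing_powi_minus_two dirichlet_energy_nonneg)
  ultimately have "?X \<le> 0" using h by (smt (verit) mult_pos_pos sum_nonneg zero_le_power2)
  moreover have "?X \<ge> 0" by (simp add: sum_nonneg)
  ultimately have "?X = 0" by simp
  then show ?thesis using \<open>finite S\<close> by (simp add: sum_nonneg_eq_0_iff)
qed

theorem mainTheorem2:
  fixes a :: real
  assumes "0 < a" and "a \<le> 1"
  shows "\<exists>c::real. c > 0 \<and>
    (\<forall>(L::nat) (k::nat) (m::nat) (\<mu>0::real).
       odd L \<and> L > 1 \<and> k \<ge> 1 \<and> m \<ge> k \<and> \<mu>0 \<ge> 0 \<longrightarrow>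
       (let \<eta> = real L powi (- int k) in
        (\<forall>p::int^'d. (\<forall>\<mu>. 0 \<le> p$\<mu> \<and> p$\<mu> < int L ^ (m - k)) \<longrightarrow>
           (\<forall>f. Re (lat_inner \<eta> (unit_box L k p) f (opA a \<mu>0 L k (unit_box L k p) f))
                 \<ge> c * Re (lat_inner \<eta> (unit_box L k p) f (opB L k (unit_box L k p) f))))
        \<and> (\<forall>f::int^'d \<Rightarrow> complex. Re (lat_inner \<eta> (OmegaI L m) f (opA a \<mu>0 L k (OmegaI L m) f))
                 \<ge> c * Re (lat_inner \<eta> (OmegaI L m) f (opB L k (OmegaI L m) f)))
        \<and> (\<forall>f::int^'d \<Rightarrow> complex. (\<forall>x\<in>OmegaI L m. opA a \<mu>0 L k (OmegaI L m) f x = 0)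
               \<longrightarrow> (\<forall>x\<in>OmegaI L m. f x = 0))))"
  apply (unfold Let_def, intro exI[of _ "coercivity_const a CARD('d)"] conjI allI impI)
  subgoal by (rule coercivity_const_pos[OF assms(1)])
  subgoal by (rule coercive_on_unit_box[OF _ _ assms]) auto
  subgoal by (rule coercive_on_OmegaI[OF _ _ _ assms]) auto
  subgoal for L k m \<mu>0 f
    by (rule opA_eq_zero_imp_zero[OF _ _ coercivity_const_pos[OF assms(1)] coercive_on_OmegaI[OF _ _ _ assms]])
      (auto simp: OmegaI_def)
  done

end
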